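(* In a goal-conditioned MDP with deterministic transition dynamics, the policy that minimizes the Wasserstein distance $W_1^\pi(\rho_\pi,\rho_g)=\sum_{s\in\mathcal{S}}\rho_\pi(s\mid s_g)\,d^\pi_T(s,s_g)$ over the time-step metric is the optimal (expected-return-maximizing) policy.
   Context: A goal-conditioned MDP has discrete state space $\mathcal{S}$, discrete actions $\mathcal{A}$, goal-dependent transitions $P(\cdot\mid s,a,s_g)$ (deterministic here: each is a point mass), start-state distribution $\rho_0$, and discount $\gamma\in[0,1)$; the reward is $\mathbb{I}[s_{t+1}=s_g]$ and after reaching the goal $s_g$ the process enters an absorbing zero-reward state. The optimal policy maximizes expected discounted return. For a policy $\pi$, $T(s_g\mid\pi,s)$ is the first time-step at which $s_g$ is encountered starting from $s$ following $\pi$, and $d^\pi_T(s,s_g):=\mathbb{E}[T(s_g\mid\pi,s)]$ is the time-step quasimetric. The goal-conditioned state visitation distribution is $\rho_\pi(s\mid s_g)=\mathbb{E}_{s_0\sim\rho_0}\big[(1-\gamma)\sum_{t=0}^\infty\gamma^tP(s_t=s\mid\pi,s_g)\big]$ and $\rho_g=\delta(s_g)$. *)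

theory Defs
  imports "HOL-Probability.Probability"
begin

text \<open>The process lives on 's option: Some s is an ordinary state, None is the
  absorbing zero-reward state entered right after the goal is reached.\<close>

definition gc_step ::
  "('s \<Rightarrow> 'a \<Rightarrow> 's \<Rightarrow> 's pmf) \<Rightarrow> ('s \<Rightarrow> 's \<Rightarrow> 'a pmf) \<Rightarrow> 's \<Rightarrow> 's option \<Rightarrow> 's option pmf" where
  "gc_step P pol g x = (case x of
      None \<Rightarrow> return_pmf None
    | Some s \<Rightarrow> (if s = g then return_pmf None
                else bind_pmf (pol s g) (\<lambda>a. map_pmf Some (P s a g))))"

definition state_dist ::
  "('s \<Rightarrow> 'a \<Rightarrow> 's \<Rightarrow> 's pmf) \<Rightarrow> ('s \<Rightarrow> 's \<Rightarrow> 'a pmf) \<Rightarrow> 's \<Rightarrow> 's pmf \<Rightarrow> nat \<Rightarrow> 's option pmf" where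
  "state_dist P pol g mu t = ((\<lambda>m. bind_pmf m (gc_step P pol g)) ^^ t) (map_pmf Some mu)"

text \<open>Time-step quasimetric d_T(s, sg) = E[T(sg | pol, s)], with T the first time step at which
  the goal is encountered (T = \<infinity> if never). Since the goal is visited at most once,
  P(T = n) = P(s_n = sg). The expectation of the extended-natural random variable T is
  sum_n n P(T = n) + \<infinity> * P(T = \<infinity>).\<close>
definition hit_time_exp ::
  "('s \<Rightarrow> 'a \<Rightarrow> 's \<Rightarrow> 's pmf) \<Rightarrow> ('s \<Rightarrow> 's \<Rightarrow> 'a pmf) \<Rightarrow> 's \<Rightarrow> 's \<Rightarrow> ennreal" where
  "hit_time_exp P pol s g =
     (\<Sum>n. ennreal (real n) * ennreal (pmf (state_dist P pol g (return_pmf s) n) (Some g)))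
     + \<infinity> * (1 - (\<Sum>n. ennreal (pmf (state_dist P pol g (return_pmf s) n) (Some g))))"

definition visitation ::
  "('s \<Rightarrow> 'a \<Rightarrow> 's \<Rightarrow> 's pmf) \<Rightarrow> ('s \<Rightarrow> 's \<Rightarrow> 'a pmf) \<Rightarrow> 's \<Rightarrow> 's pmf \<Rightarrow> real \<Rightarrow> 's \<Rightarrow> ennreal" where
  "visitation P pol g rho0 \<gamma> s =
     ennreal (1 - \<gamma>) * (\<Sum>t. ennreal (\<gamma> ^ t * pmf (state_dist P pol g rho0 t) (Some s)))"

definition wasserstein_obj ::
  "('s \<Rightarrow> 'a \<Rightarrow> 's \<Rightarrow> 's pmf) \<Rightarrow> ('s \<Rightarrow> 's \<Rightarrow> 'a pmf) \<Rightarrow> 's \<Rightarrow> 's pmf \<Rightarrow> real \<Rightarrow> ennreal" where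
  "wasserstein_obj P pol g rho0 \<gamma> =
     (\<integral>\<^sup>+ s. visitation P pol g rho0 \<gamma> s * hit_time_exp P pol s g \<partial>count_space UNIV)"

text \<open>Expected discounted return with reward I[s_{t+1} = sg] (zero after absorption).\<close>
definition expected_return ::
  "('s \<Rightarrow> 'a \<Rightarrow> 's \<Rightarrow> 's pmf) \<Rightarrow> ('s \<Rightarrow> 's \<Rightarrow> 'a pmf) \<Rightarrow> 's \<Rightarrow> 's pmf \<Rightarrow> real \<Rightarrow> real" where
  "expected_return P pol g rho0 \<gamma> =
     (\<Sum>t. \<gamma> ^ t * pmf (state_dist P pol g rho0 (Suc t)) (Some g))"

end

theory Submission
  imports Defs
begin

text \<open>
  With deterministic dynamics let \<open>D(s)\<close> be the number of actions on a shortest path from \<open>s\<close>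
  to the goal (\<open>\<infinity>\<close> if there is none). Every policy has \<open>d\<^sub>T(s, s\<^sub>g) \<ge> D(s)\<close>, hence
  \<open>W(\<pi>) \<ge> \<Sum>\<^sub>s \<rho>\<^sub>\<pi>(s) D(s)\<close>. Along any trajectory \<open>D\<close> drops by at most one per step,
  so \<open>\<Sum>\<^sub>s \<rho>\<^sub>\<pi>(s) D(s) \<ge> (1 - \<gamma>) \<Sum>\<^sub>t \<gamma>\<^sup>t E[(D(s\<^sub>0) - t)\<^sup>+]\<close>, which is exactly
  \<open>W\<close> of the greedy shortest-path policy, whose hitting time is \<open>D\<close>. A minimiser \<open>\<pi>\<close>
  therefore has \<open>d\<^sub>T(s, s\<^sub>g) = D(s)\<close> on the support of \<open>\<rho>\<^sub>0\<close>; as \<open>D(s)\<close> is also a lower bound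
  for the hitting time, \<open>\<pi>\<close> hits the goal at time \<open>D(s)\<close> almost surely. No policy can
  collect the reward before that time, so \<open>\<pi>\<close> attains the maximal return
  \<open>\<gamma>\<^bsup>D(s) - 1\<^esup>\<close> from every start state \<open>s \<noteq> s\<^sub>g\<close>.
\<close>

section \<open>Trajectory distributions\<close>

abbreviation hit_prob ::
  "('s \<Rightarrow> 'a \<Rightarrow> 's \<Rightarrow> 's pmf) \<Rightarrow> ('s \<Rightarrow> 's \<Rightarrow> 'a pmf) \<Rightarrow> 's \<Rightarrow> 's \<Rightarrow> nat \<Rightarrow> real" where
  "hit_prob P pol g s n \<equiv> pmf (state_dist P pol g (return_pmf s) n) (Some g)"

lemma state_dist_0 [simp]: "state_dist P pol g mu 0 = map_pmf Some mu"
  by (simp add: state_dist_def)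

lemma state_dist_Suc:
  "state_dist P pol g mu (Suc t) = bind_pmf (state_dist P pol g mu t) (gc_step P pol g)"
  by (simp add: state_dist_def)

lemma state_dist_bind:
  "state_dist P pol g mu t = bind_pmf mu (\<lambda>s. state_dist P pol g (return_pmf s) t)"
  by (induction t) (simp_all add: state_dist_Suc map_pmf_def bind_return_pmf bind_assoc_pmf)

lemma gc_step_None [simp]: "gc_step P pol g None = return_pmf None"
  by (simp add: gc_step_def)

lemma gc_step_goal [simp]: "gc_step P pol g (Some g) = return_pmf None"
  by (simp add: gc_step_def)

lemma gc_step_Some:
  "s \<noteq> g \<Longrightarrow> gc_step P pol g (Some s) = bind_pmf (pol s g) (\<lambda>a. map_pmf Some (P s a g))"
  by (simp add: gc_step_def)

lemma pmf_gc_step_None: "pmf (gc_step P pol g x) None = indicator {None, Some g} x"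
proof (cases "x = None \<or> x = Some g")
  case False
  then obtain s where "x = Some s" "s \<noteq> g" by auto
  then have "None \<notin> set_pmf (gc_step P pol g x)" by (auto simp: gc_step_Some)
  then show ?thesis using False by (simp add: pmf_eq_0_set_pmf)
qed auto

lemma pmf_state_dist_None:
  "pmf (state_dist P pol g mu N) None = (\<Sum>n<N. pmf (state_dist P pol g mu n) (Some g))"
proof (induction N)
  case 0
  show ?case by (simp add: pmf_eq_0_set_pmf)
next
  case (Suc N)
  have "pmf (state_dist P pol g mu (Suc N)) None
      = measure (state_dist P pol g mu N) {None, Some g}"
    by (simp add: state_dist_Suc pmf_bind pmf_gc_step_None)
  then show ?case
    using Suc.IH by (simp add: measure_measure_pmf_finite)
qed

lemma suminf_hit_le_1: "(\<Sum>n. ennreal (pmf (state_dist P pol g mu n) (Some g))) \<le> 1"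
proof (rule suminf_le_const)
  fix N
  have "(\<Sum>n<N. ennreal (pmf (state_dist P pol g mu n) (Some g)))
      = ennreal (pmf (state_dist P pol g mu N) None)"
    by (simp add: pmf_state_dist_None)
  then show "(\<Sum>n<N. ennreal (pmf (state_dist P pol g mu n) (Some g))) \<le> 1"
    by (simp add: pmf_le_1)
qed simp

lemma state_dist_from_goal: "state_dist P pol g (return_pmf g) (Suc t) = return_pmf None"
  by (induction t) (simp_all add: state_dist_Suc bind_return_pmf)

section \<open>Shortest paths to the goal\<close>

fun reaches_in :: "('s \<Rightarrow> 'a \<Rightarrow> 's \<Rightarrow> 's pmf) \<Rightarrow> 's \<Rightarrow> nat \<Rightarrow> 's \<Rightarrow> bool" where
  "reaches_in P g 0 s \<longleftrightarrow> s = g"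
| "reaches_in P g (Suc n) s \<longleftrightarrow> s \<noteq> g \<and> (\<exists>a. \<exists>s'\<in>set_pmf (P s a g). reaches_in P g n s')"

definition reachable :: "('s \<Rightarrow> 'a \<Rightarrow> 's \<Rightarrow> 's pmf) \<Rightarrow> 's \<Rightarrow> 's \<Rightarrow> bool" where
  "reachable P g s \<longleftrightarrow> (\<exists>n. reaches_in P g n s)"

text \<open>For unreachable \<open>s\<close>, \<open>LEAST\<close> yields the junk value \<open>goal_dist P g s = 0\<close>;
  \<open>goal_dist_ext\<close> is \<open>\<infinity>\<close> there.\<close>
definition goal_dist :: "('s \<Rightarrow> 'a \<Rightarrow> 's \<Rightarrow> 's pmf) \<Rightarrow> 's \<Rightarrow> 's \<Rightarrow> nat" where
  "goal_dist P g s = (LEAST n. reaches_in P g n s)"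

definition goal_dist_ext :: "('s \<Rightarrow> 'a \<Rightarrow> 's \<Rightarrow> 's pmf) \<Rightarrow> 's \<Rightarrow> 's \<Rightarrow> ennreal" where
  "goal_dist_ext P g s = (if reachable P g s then of_nat (goal_dist P g s) else \<infinity>)"

lemma reachableI: "reaches_in P g n s \<Longrightarrow> reachable P g s"
  unfolding reachable_def by blast

lemma goal_dist_le: "reaches_in P g n s \<Longrightarrow> goal_dist P g s \<le> n"
  unfolding goal_dist_def by (rule Least_le)

lemma reaches_in_goal_dist: "reachable P g s \<Longrightarrow> reaches_in P g (goal_dist P g s) s"
  unfolding reachable_def goal_dist_def by (metis LeastI)

lemma reachable_goal [simp]: "reachable P g g"
  and goal_dist_goal [simp]: "goal_dist P g g = 0"
  using reachableI[of P g 0 g] goal_dist_le[of P g 0 g] by auto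

lemma goal_dist_eq_0_iff: "reachable P g s \<Longrightarrow> goal_dist P g s = 0 \<longleftrightarrow> s = g"
  using reaches_in_goal_dist[of P g s] by auto

lemma goal_dist_step:
  assumes "s \<noteq> g" "s' \<in> set_pmf (P s a g)" "reachable P g s'"
  shows "reachable P g s \<and> goal_dist P g s \<le> Suc (goal_dist P g s')"
proof -
  have "reaches_in P g (goal_dist P g s') s'"
    using assms(3) by (rule reaches_in_goal_dist)
  then have path: "reaches_in P g (Suc (goal_dist P g s')) s"
    using assms(1,2) by auto
  show ?thesis
    using reachableI[OF path] goal_dist_le[OF path] by simp
qed

lemma shortest_step_exists:
  assumes "reachable P g s" "s \<noteq> g"
  shows "\<exists>a. \<exists>s'\<in>set_pmf (P s a g). reachable P g s' \<and> Suc (goal_dist P g s') = goal_dist P g s"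
proof -
  obtain n where n: "goal_dist P g s = Suc n"
    using assms goal_dist_eq_0_iff[of P g s] not0_implies_Suc by metis
  have "reaches_in P g (Suc n) s"
    using reaches_in_goal_dist[OF assms(1)] n by simp
  then obtain a s' where s': "s' \<in> set_pmf (P s a g)" and path: "reaches_in P g n s'"
    by auto
  have reach: "reachable P g s'"
    using path by (rule reachableI)
  have "goal_dist P g s' \<le> n"
    using path by (rule goal_dist_le)
  moreover have "goal_dist P g s \<le> Suc (goal_dist P g s')"
    using goal_dist_step[OF assms(2) s' reach] by blast
  ultimately have "Suc (goal_dist P g s') = goal_dist P g s"
    using n by linarith
  then show ?thesis
    using s' reach by blast
qed

lemma state_dist_support_goal_dist:
  assumes "x \<in> set_pmf (state_dist P pol g (return_pmf s\<^sub>0) t)"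
  shows "case x of
           None \<Rightarrow> reachable P g s\<^sub>0 \<and> goal_dist P g s\<^sub>0 < t
         | Some s \<Rightarrow> reachable P g s \<longrightarrow> reachable P g s\<^sub>0 \<and> goal_dist P g s\<^sub>0 \<le> goal_dist P g s + t"
  using assms
proof (induction t arbitrary: x)
  case 0
  then show ?case by auto
next
  case (Suc t)
  then obtain y where y: "y \<in> set_pmf (state_dist P pol g (return_pmf s\<^sub>0) t)"
    and x: "x \<in> set_pmf (gc_step P pol g y)"
    by (auto simp: state_dist_Suc)
  note IH = Suc.IH[OF y]
  show ?case
  proof (cases y)
    case None
    then show ?thesis using IH x by auto
  next
    case (Some s)
    show ?thesis
    proof (cases "s = g")
      case True
      then show ?thesis using IH x Some by auto
    next
      case False
      then obtain a s' where s': "s' \<in> set_pmf (P s a g)" and "x = Some s'"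
        using x Some by (auto simp: gc_step_Some)
      moreover have "reachable P g s \<and> goal_dist P g s \<le> Suc (goal_dist P g s')"
        if "reachable P g s'"
        using goal_dist_step[OF False s' that] .
      ultimately show ?thesis
        using IH Some by auto
    qed
  qed
qed

lemma goal_dist_le_if_hit_prob_nonzero:
  assumes "hit_prob P pol g s n \<noteq> 0"
  shows "reachable P g s \<and> goal_dist P g s \<le> n"
  using state_dist_support_goal_dist[of "Some g" P pol g s n] assms
  by (simp add: set_pmf_iff)

section \<open>Hitting times\<close>

text \<open>The mean of a random variable \<open>T\<close> with values in \<open>\<nat> \<union> {\<infinity>}\<close> and \<open>P(T = n) = p n\<close>:
  the mass missing from \<open>p\<close> sits at \<open>\<infinity>\<close>.\<close>
definition extended_mean :: "(nat \<Rightarrow> ennreal) \<Rightarrow> ennreal" where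
  "extended_mean p = (\<Sum>n. ennreal (real n) * p n) + \<infinity> * (1 - (\<Sum>n. p n))"

lemma hit_time_exp_eq_extended_mean:
  "hit_time_exp P pol s g = extended_mean (\<lambda>n. ennreal (hit_prob P pol g s n))"
  by (simp add: hit_time_exp_def extended_mean_def)

lemma extended_mean_eq_top: "(\<Sum>n. p n) < 1 \<Longrightarrow> extended_mean p = \<infinity>"
  by (auto simp: extended_mean_def ennreal_top_mult diff_eq_0_iff_ennreal)

lemma suminf_ge_1_if_extended_mean_finite: "extended_mean p \<noteq> \<infinity> \<Longrightarrow> 1 \<le> (\<Sum>n. p n)"
  using extended_mean_eq_top not_le by blast

lemma suminf_le_extended_mean: "(\<Sum>n. ennreal (real n) * p n) \<le> extended_mean p"
  unfolding extended_mean_def by simp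

lemma extended_mean_point_mass: "extended_mean (\<lambda>n. if n = k then 1 else 0) = of_nat k"
proof -
  have "(\<Sum>n. ennreal (real n) * (if n = k then 1 else 0)) = of_nat k"
    using sums_single[of k "\<lambda>n. ennreal (real n)"]
    by (simp add: sums_unique[symmetric] ennreal_of_nat_eq_real_of_nat if_distrib cong: if_cong)
  moreover have "(\<Sum>n. (if n = k then 1 else 0) :: ennreal) = 1"
    using sums_single[of k "\<lambda>n. 1 :: ennreal"] sums_unique by metis
  ultimately show ?thesis
    by (simp add: extended_mean_def)
qed

lemma extended_mean_ge:
  assumes "\<And>n. n < k \<Longrightarrow> p n = 0"
  shows "of_nat k \<le> extended_mean p"
proof (cases "extended_mean p = \<infinity>")
  case False
  have "of_nat k \<le> of_nat k * (\<Sum>n. p n)"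
    using mult_left_mono[OF suminf_ge_1_if_extended_mean_finite[OF False]] by simp
  also have "\<dots> = (\<Sum>n. of_nat k * p n)"
    by (rule ennreal_suminf_cmult[symmetric])
  also have "\<dots> \<le> (\<Sum>n. ennreal (real n) * p n)"
  proof (intro suminf_le summableI)
    show "of_nat k * p n \<le> ennreal (real n) * p n" for n
      using assms[of n] by (cases "n < k") (auto intro!: mult_right_mono simp: ennreal_of_nat_eq_real_of_nat)
  qed
  also have "\<dots> \<le> extended_mean p"
    by (rule suminf_le_extended_mean)
  finally show ?thesis .
qed simp

lemma extended_mean_le_imp_point_mass:
  assumes below: "\<And>n. n < k \<Longrightarrow> p n = 0" and le: "extended_mean p \<le> of_nat k"
  shows "1 \<le> p k"
proof -
  have "1 \<le> (\<Sum>n. p n)"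
    using le by (intro suminf_ge_1_if_extended_mean_finite) (auto simp: top_unique)
  then have "of_nat k + 1 \<le> (of_nat k + 1) * (\<Sum>n. p n)"
    using mult_left_mono[of 1 "\<Sum>n. p n" "of_nat k + 1"] by simp
  also have "\<dots> = (\<Sum>n. (of_nat k + 1) * p n)"
    by (rule ennreal_suminf_cmult[symmetric])
  also have "\<dots> \<le> (\<Sum>n. ennreal (real n) * p n + (if n = k then p k else 0))"
  proof (intro suminf_le summableI)
    fix n
    consider "n < k" | "n = k" | "k < n"
      by linarith
    then show "(of_nat k + 1) * p n \<le> ennreal (real n) * p n + (if n = k then p k else 0)"
    proof cases
      case 3
      then have "ennreal (real k + 1) \<le> ennreal (real n)"
        by (intro ennreal_leI) simp
      then show ?thesis
        using 3 by (auto intro: mult_right_mono simp: ennreal_of_nat_eq_real_of_nat)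
    qed (auto simp: below distrib_right ennreal_of_nat_eq_real_of_nat)
  qed
  also have "\<dots> = (\<Sum>n. ennreal (real n) * p n) + p k"
    using sums_single[of k "\<lambda>_. p k"] by (simp add: suminf_add[symmetric] sums_unique[symmetric])
  also have "\<dots> \<le> of_nat k + p k"
    using order.trans[OF suminf_le_extended_mean le] by (rule add_right_mono)
  finally show ?thesis
    by (simp add: ennreal_add_left_cancel_le)
qed

lemma goal_dist_ext_le_hit_time_exp: "goal_dist_ext P g s \<le> hit_time_exp P pol s g"
proof (cases "reachable P g s")
  case True
  have "ennreal (hit_prob P pol g s n) = 0" if "n < goal_dist P g s" for n
    using that goal_dist_le_if_hit_prob_nonzero[of P pol g s n] by auto
  then show ?thesis
    using True unfolding hit_time_exp_eq_extended_mean goal_dist_ext_def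
    by (simp add: extended_mean_ge)
next
  case False
  then have "hit_prob P pol g s n = 0" for n
    using goal_dist_le_if_hit_prob_nonzero[of P pol g s n] by auto
  then show ?thesis
    unfolding hit_time_exp_eq_extended_mean by (simp add: extended_mean_eq_top)
qed

lemma hit_prob_goal_dist_eq_1:
  assumes "reachable P g s" and "hit_time_exp P pol s g \<le> of_nat (goal_dist P g s)"
  shows "hit_prob P pol g s (goal_dist P g s) = 1"
proof -
  have "ennreal (hit_prob P pol g s n) = 0" if "n < goal_dist P g s" for n
    using that goal_dist_le_if_hit_prob_nonzero[of P pol g s n] by auto
  then have "1 \<le> ennreal (hit_prob P pol g s (goal_dist P g s))"
    using assms(2) unfolding hit_time_exp_eq_extended_mean
    by (rule extended_mean_le_imp_point_mass)
  then show ?thesis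
    using pmf_le_1 antisym by (metis ennreal_ge_1)
qed

section \<open>The shortest-path policy\<close>

definition deterministic :: "('s \<Rightarrow> 'a \<Rightarrow> 's \<Rightarrow> 's pmf) \<Rightarrow> bool" where
  "deterministic P \<longleftrightarrow> (\<forall>s a sg. \<exists>s'. P s a sg = return_pmf s')"

text \<open>Outside the reachable non-goal states the choice is arbitrary.\<close>
definition shortest_action :: "('s \<Rightarrow> 'a \<Rightarrow> 's \<Rightarrow> 's pmf) \<Rightarrow> 's \<Rightarrow> 's \<Rightarrow> 'a" where
  "shortest_action P g s =
     (SOME a. \<exists>s'\<in>set_pmf (P s a g). reachable P g s' \<and> Suc (goal_dist P g s') = goal_dist P g s)"

definition shortest_policy :: "('s \<Rightarrow> 'a \<Rightarrow> 's \<Rightarrow> 's pmf) \<Rightarrow> 's \<Rightarrow> 's \<Rightarrow> 's \<Rightarrow> 'a pmf" where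
  "shortest_policy P g = (\<lambda>s _. return_pmf (shortest_action P g s))"

lemma gc_step_shortest_policy:
  assumes det: "deterministic P" and "reachable P g s" "s \<noteq> g"
  shows "\<exists>s'. gc_step P (shortest_policy P g) g (Some s) = return_pmf (Some s')
               \<and> reachable P g s' \<and> Suc (goal_dist P g s') = goal_dist P g s"
proof -
  obtain s' where s': "s' \<in> set_pmf (P s (shortest_action P g s) g)"
    "reachable P g s'" "Suc (goal_dist P g s') = goal_dist P g s"
    using someI_ex[OF shortest_step_exists[OF assms(2,3)]] unfolding shortest_action_def by blast
  obtain s'' where "P s (shortest_action P g s) g = return_pmf s''"
    using det unfolding deterministic_def by blast
  with s'(1) have "P s (shortest_action P g s) g = return_pmf s'"
    by simp
  then have "gc_step P (shortest_policy P g) g (Some s) = return_pmf (Some s')"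
    using assms(3) by (simp add: gc_step_Some shortest_policy_def bind_return_pmf)
  with s'(2,3) show ?thesis
    by blast
qed

lemma state_dist_shortest_policy:
  assumes det: "deterministic P" and "reachable P g z"
  shows "\<exists>x. state_dist P (shortest_policy P g) g (return_pmf z) t = return_pmf x
           \<and> (case x of None \<Rightarrow> goal_dist P g z < t
              | Some s \<Rightarrow> reachable P g s \<and> goal_dist P g s + t = goal_dist P g z)"
proof (induction t)
  case 0
  show ?case
    using assms(2) by simp
next
  case (Suc t)
  then obtain x where x: "state_dist P (shortest_policy P g) g (return_pmf z) t = return_pmf x"
    and inv: "case x of None \<Rightarrow> goal_dist P g z < t
              | Some s \<Rightarrow> reachable P g s \<and> goal_dist P g s + t = goal_dist P g z"
    by blast
  have step: "state_dist P (shortest_policy P g) g (return_pmf z) (Suc t)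
      = gc_step P (shortest_policy P g) g x"
    by (simp add: state_dist_Suc x bind_return_pmf)
  show ?case
  proof (cases x)
    case None
    then show ?thesis
      unfolding step using inv by simp
  next
    case (Some s)
    show ?thesis
    proof (cases "s = g")
      case True
      then show ?thesis
        unfolding step using inv Some by simp
    next
      case False
      then show ?thesis
        unfolding step using gc_step_shortest_policy[OF det _ False] inv Some by auto
    qed
  qed
qed

lemma hit_time_exp_shortest_policy:
  assumes det: "deterministic P" and "reachable P g s"
  shows "hit_time_exp P (shortest_policy P g) s g = of_nat (goal_dist P g s)"
proof -
  have hit: "ennreal (hit_prob P (shortest_policy P g) g s n) = (if n = goal_dist P g s then 1 else 0)"
    for n
  proof -
    obtain x where x: "state_dist P (shortest_policy P g) g (return_pmf s) n = return_pmf x"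
      and inv: "case x of None \<Rightarrow> goal_dist P g s < n
              | Some s' \<Rightarrow> reachable P g s' \<and> goal_dist P g s' + n = goal_dist P g s"
      using state_dist_shortest_policy[OF assms] by blast
    have "x = Some g \<longleftrightarrow> n = goal_dist P g s"
      using inv by (cases x) (auto simp: goal_dist_eq_0_iff)
    then show ?thesis
      by (simp add: x)
  qed
  show ?thesis
    unfolding hit_time_exp_eq_extended_mean hit by (rule extended_mean_point_mass)
qed

section \<open>The Wasserstein objective\<close>

lemma nn_integral_measure_pmf_option:
  "(\<integral>\<^sup>+x. case_option 0 f x \<partial>measure_pmf p)
     = (\<integral>\<^sup>+s. ennreal (pmf p (Some s)) * f s \<partial>count_space UNIV)"
proof -
  define h where "h x = ennreal (pmf p x) * case_option 0 f x" for x
  have "(\<integral>\<^sup>+x. case_option 0 f x \<partial>measure_pmf p) = (\<integral>\<^sup>+x. h x \<partial>count_space UNIV)"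
    unfolding h_def by (rule nn_integral_measure_pmf)
  also have "\<dots> = (\<integral>\<^sup>+x. h x * indicator (range Some) x \<partial>count_space UNIV)"
    by (intro nn_integral_cong) (auto simp: h_def split: option.splits)
  also have "\<dots> = (\<integral>\<^sup>+x. h x \<partial>count_space (range Some))"
    by (simp add: nn_integral_count_space_indicator)
  also have "\<dots> = (\<integral>\<^sup>+s. h (Some s) \<partial>count_space UNIV)"
    by (rule nn_integral_bij_count_space[symmetric]) (auto simp: bij_betw_def)
  finally show ?thesis
    by (simp add: h_def)
qed

lemma nn_integral_visitation:
  assumes "0 \<le> \<gamma>"
  shows "(\<integral>\<^sup>+s. visitation P pol g mu \<gamma> s * f s \<partial>count_space UNIV)
    = ennreal (1 - \<gamma>) *
      (\<Sum>t. ennreal (\<gamma> ^ t) * (\<integral>\<^sup>+x. case_option 0 f x \<partial>measure_pmf (state_dist P pol g mu t)))"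
proof -
  have "(\<integral>\<^sup>+s. visitation P pol g mu \<gamma> s * f s \<partial>count_space UNIV)
      = ennreal (1 - \<gamma>) *
        (\<integral>\<^sup>+s. (\<Sum>t. ennreal (\<gamma> ^ t) * (ennreal (pmf (state_dist P pol g mu t) (Some s)) * f s))
          \<partial>count_space UNIV)"
    unfolding visitation_def
    by (subst nn_integral_cmult[symmetric])
       (simp_all add: ennreal_suminf_multc[symmetric] ennreal_mult assms mult.assoc
         del: ennreal_suminf_multc)
  also have "\<dots> = ennreal (1 - \<gamma>) *
      (\<Sum>t. ennreal (\<gamma> ^ t) *
        (\<integral>\<^sup>+s. ennreal (pmf (state_dist P pol g mu t) (Some s)) * f s \<partial>count_space UNIV))"
    by (simp add: nn_integral_suminf nn_integral_cmult)
  finally show ?thesis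
    by (simp add: nn_integral_measure_pmf_option)
qed

lemma visitation_pos:
  assumes "\<gamma> < 1" and "z \<in> set_pmf mu"
  shows "visitation P pol g mu \<gamma> z \<noteq> 0"
proof -
  have "0 < ennreal (pmf mu z)"
    using assms(2) by (simp add: set_pmf_iff)
  also have "ennreal (pmf mu z) = (\<Sum>t\<in>{0}. ennreal (\<gamma> ^ t * pmf (state_dist P pol g mu t) (Some z)))"
    by (simp add: pmf_map_inj')
  also have "\<dots> \<le> (\<Sum>t. ennreal (\<gamma> ^ t * pmf (state_dist P pol g mu t) (Some z)))"
    by (intro sum_le_suminf) auto
  finally show ?thesis
    using assms(1) unfolding visitation_def by simp
qed

lemma weighted_nn_integral_le_imp_le:
  fixes w f h :: "'a \<Rightarrow> ennreal"
  assumes h_le_f: "\<And>x. h x \<le> f x"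
    and le: "(\<integral>\<^sup>+x. w x * f x \<partial>count_space UNIV) \<le> (\<integral>\<^sup>+x. w x * h x \<partial>count_space UNIV)"
    and finite: "(\<integral>\<^sup>+x. w x * h x \<partial>count_space UNIV) \<noteq> \<infinity>"
    and "w z \<noteq> 0"
  shows "f z \<le> h z"
proof -
  let ?H = "\<integral>\<^sup>+x. w x * h x \<partial>count_space UNIV"
  let ?D = "\<integral>\<^sup>+x. w x * (f x - h x) \<partial>count_space UNIV"
  have "(\<integral>\<^sup>+x. w x * f x \<partial>count_space UNIV) = (\<integral>\<^sup>+x. w x * h x + w x * (f x - h x) \<partial>count_space UNIV)"
    by (intro nn_integral_cong) (simp add: distrib_left[symmetric] add_diff_inverse_ennreal h_le_f)
  also have "\<dots> = ?H + ?D"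
    by (rule nn_integral_add) auto
  finally have "?H + ?D \<le> ?H + 0"
    using le by simp
  then have "?D = 0"
    using finite by (simp add: ennreal_add_left_cancel_le)
  then have "w z * (f z - h z) = 0"
    using nn_integral_ge_point[of z UNIV "\<lambda>x. w x * (f x - h x)"] by simp
  then show ?thesis
    using \<open>w z \<noteq> 0\<close> by (simp add: ennreal_minus_eq_0)
qed

lemma reachable_if_wasserstein_obj_finite:
  assumes "\<gamma> < 1" and "wasserstein_obj P pol g mu \<gamma> \<noteq> \<infinity>" and "z \<in> set_pmf mu"
  shows "reachable P g z"
proof (rule ccontr)
  assume "\<not> reachable P g z"
  then have "hit_time_exp P pol z g = \<infinity>"
    using goal_dist_ext_le_hit_time_exp[of P g z pol] by (simp add: goal_dist_ext_def top_unique)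
  then have "visitation P pol g mu \<gamma> z * hit_time_exp P pol z g = \<infinity>"
    using visitation_pos[OF assms(1,3)] by (simp add: ennreal_mult_top)
  then have "wasserstein_obj P pol g mu \<gamma> = \<infinity>"
    unfolding wasserstein_obj_def
    using nn_integral_ge_point[of z UNIV "\<lambda>s. visitation P pol g mu \<gamma> s * hit_time_exp P pol s g"]
    by (simp add: top_unique)
  then show False
    using assms(2) by simp
qed

lemma nn_integral_state_dist_shortest_policy:
  assumes det: "deterministic P" and reach: "\<forall>z\<in>set_pmf mu. reachable P g z"
  shows "(\<integral>\<^sup>+x. case_option 0 (\<lambda>s. hit_time_exp P (shortest_policy P g) s g) x
            \<partial>measure_pmf (state_dist P (shortest_policy P g) g mu t))
       = (\<integral>\<^sup>+z. of_nat (goal_dist P g z - t) \<partial>measure_pmf mu)"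
  unfolding state_dist_bind[of _ _ _ mu] nn_integral_bind_pmf
proof (intro nn_integral_cong_AE AE_pmfI)
  fix z assume "z \<in> set_pmf mu"
  then have "reachable P g z"
    using reach by blast
  then obtain x where "state_dist P (shortest_policy P g) g (return_pmf z) t = return_pmf x"
    and "case x of None \<Rightarrow> goal_dist P g z < t
         | Some s \<Rightarrow> reachable P g s \<and> goal_dist P g s + t = goal_dist P g z"
    using state_dist_shortest_policy[OF det] by blast
  then show "(\<integral>\<^sup>+x. case_option 0 (\<lambda>s. hit_time_exp P (shortest_policy P g) s g) x
            \<partial>measure_pmf (state_dist P (shortest_policy P g) g (return_pmf z) t))
       = of_nat (goal_dist P g z - t)"
    by (cases x) (auto simp: hit_time_exp_shortest_policy[OF det])
qed

lemma nn_integral_state_dist_goal_dist_ext_ge: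
  "(\<integral>\<^sup>+z. of_nat (goal_dist P g z - t) \<partial>measure_pmf mu)
       \<le> (\<integral>\<^sup>+x. case_option 0 (goal_dist_ext P g) x \<partial>measure_pmf (state_dist P pol g mu t))"
  unfolding state_dist_bind[of _ _ _ mu] nn_integral_bind_pmf
proof (intro nn_integral_mono)
  fix z
  have "of_nat (goal_dist P g z - t)
      = (\<integral>\<^sup>+x. of_nat (goal_dist P g z - t) \<partial>measure_pmf (state_dist P pol g (return_pmf z) t))"
    by (simp add: measure_pmf.emeasure_space_1)
  also have "\<dots> \<le> (\<integral>\<^sup>+x. case_option 0 (goal_dist_ext P g) x
                     \<partial>measure_pmf (state_dist P pol g (return_pmf z) t))"
  proof (intro nn_integral_mono_AE AE_pmfI)
    fix x assume "x \<in> set_pmf (state_dist P pol g (return_pmf z) t)"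
    from state_dist_support_goal_dist[OF this]
    show "of_nat (goal_dist P g z - t) \<le> case_option 0 (goal_dist_ext P g) x"
      by (cases x) (auto simp: goal_dist_ext_def)
  qed
  finally show "of_nat (goal_dist P g z - t)
      \<le> (\<integral>\<^sup>+x. case_option 0 (goal_dist_ext P g) x \<partial>measure_pmf (state_dist P pol g (return_pmf z) t))" .
qed

text \<open>Both sides are discounted sums over time; at time \<open>t\<close> the left summand is
  \<open>E[(goal_dist z - t)\<^sup>+]\<close> for \<open>z \<sim> mu\<close>, the right one is bounded below by it.\<close>
lemma wasserstein_obj_shortest_policy_le:
  assumes det: "deterministic P" and "0 \<le> \<gamma>" and reach: "\<forall>z\<in>set_pmf mu. reachable P g z"
  shows "wasserstein_obj P (shortest_policy P g) g mu \<gamma>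
       \<le> (\<integral>\<^sup>+s. visitation P pol g mu \<gamma> s * goal_dist_ext P g s \<partial>count_space UNIV)"
  unfolding wasserstein_obj_def nn_integral_visitation[OF \<open>0 \<le> \<gamma>\<close>]
    nn_integral_state_dist_shortest_policy[OF det reach]
  using nn_integral_state_dist_goal_dist_ext_ge
  by (intro mult_left_mono suminf_le) auto

section \<open>Discounted return\<close>

lemma summable_expected_return:
  assumes "0 \<le> \<gamma>" "\<gamma> < 1"
  shows "summable (\<lambda>t. \<gamma> ^ t * pmf (state_dist P pol g mu (Suc t)) (Some g))"
proof (rule summable_comparison_test[where g="\<lambda>t. \<gamma> ^ t"])
  show "\<exists>N. \<forall>n\<ge>N. norm (\<gamma> ^ n * pmf (state_dist P pol g mu (Suc n)) (Some g)) \<le> \<gamma> ^ n"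
    using assms by (auto intro!: mult_left_le pmf_le_1)
  show "summable (\<lambda>t. \<gamma> ^ t)"
    using assms by (intro summable_geometric) simp
qed

lemma expected_return_nonneg: "0 \<le> \<gamma> \<Longrightarrow> \<gamma> < 1 \<Longrightarrow> 0 \<le> expected_return P pol g mu \<gamma>"
  unfolding expected_return_def by (intro suminf_nonneg summable_expected_return) auto

lemma ennreal_expected_return:
  assumes "0 \<le> \<gamma>" "\<gamma> < 1"
  shows "ennreal (expected_return P pol g mu \<gamma>)
       = (\<Sum>t. ennreal (\<gamma> ^ t) * ennreal (pmf (state_dist P pol g mu (Suc t)) (Some g)))"
  unfolding expected_return_def using assms
  by (simp add: suminf_ennreal2[symmetric] summable_expected_return ennreal_mult)

lemma ennreal_expected_return_bind:
  assumes "0 \<le> \<gamma>" "\<gamma> < 1"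
  shows "ennreal (expected_return P pol g mu \<gamma>)
       = (\<integral>\<^sup>+z. ennreal (expected_return P pol g (return_pmf z) \<gamma>) \<partial>measure_pmf mu)"
  unfolding ennreal_expected_return[OF assms] state_dist_bind[of _ _ _ mu] ennreal_pmf_bind
  by (simp add: nn_integral_cmult[symmetric] nn_integral_suminf[symmetric])

lemma ennreal_suminf_Suc_le: "(\<Sum>n. f (Suc n)) \<le> (\<Sum>n. f n :: ennreal)"
proof (rule suminf_le_const)
  show "(\<Sum>n<N. f (Suc n)) \<le> (\<Sum>n. f n)" for N
  proof -
    have "(\<Sum>n<N. f (Suc n)) \<le> (\<Sum>n<Suc N. f n)"
      by (simp only: sum.lessThan_Suc_shift) simp
    also have "\<dots> \<le> (\<Sum>n. f n)"
      by (intro sum_le_suminf) auto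
    finally show ?thesis .
  qed
qed simp

lemma suminf_discounted_le:
  fixes q :: "nat \<Rightarrow> real"
  assumes "0 \<le> \<gamma>" "\<gamma> \<le> 1"
    and vanish: "\<And>t. t < m \<Longrightarrow> q t = 0" and total: "(\<Sum>t. ennreal (q t)) \<le> 1"
  shows "(\<Sum>t. ennreal (\<gamma> ^ t) * ennreal (q t)) \<le> ennreal (\<gamma> ^ m)"
proof -
  have "ennreal (\<gamma> ^ t) * ennreal (q t) \<le> ennreal (\<gamma> ^ m) * ennreal (q t)" for t
  proof (cases "t < m")
    case False
    then have "\<gamma> ^ t \<le> \<gamma> ^ m"
      using assms(1,2) by (intro power_decreasing) auto
    then show ?thesis
      by (intro mult_right_mono ennreal_leI) auto
  qed (simp add: vanish)
  then have "(\<Sum>t. ennreal (\<gamma> ^ t) * ennreal (q t)) \<le> (\<Sum>t. ennreal (\<gamma> ^ m) * ennreal (q t))"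
    by (intro suminf_le) auto
  also have "\<dots> = ennreal (\<gamma> ^ m) * (\<Sum>t. ennreal (q t))"
    by (rule ennreal_suminf_cmult)
  also have "\<dots> \<le> ennreal (\<gamma> ^ m)"
    using mult_left_mono[OF total] by simp
  finally show ?thesis .
qed

lemma expected_return_from_goal: "expected_return P pol g (return_pmf g) \<gamma> = 0"
  by (simp add: expected_return_def state_dist_from_goal)

lemma expected_return_le_goal_dist:
  assumes "0 \<le> \<gamma>" "\<gamma> < 1"
  shows "expected_return P pol g (return_pmf z) \<gamma> \<le> \<gamma> ^ (goal_dist P g z - 1)"
proof -
  let ?q = "\<lambda>t. hit_prob P pol g z (Suc t)"
  have "ennreal (expected_return P pol g (return_pmf z) \<gamma>) \<le> ennreal (\<gamma> ^ (goal_dist P g z - 1))"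
    unfolding ennreal_expected_return[OF assms]
  proof (rule suminf_discounted_le)
    show "?q t = 0" if "t < goal_dist P g z - 1" for t
    proof (rule ccontr)
      assume "?q t \<noteq> 0"
      then have "goal_dist P g z \<le> Suc t"
        using goal_dist_le_if_hit_prob_nonzero[of P pol g z "Suc t"] by simp
      with that show False
        by linarith
    qed
    have "(\<Sum>t. ennreal (?q t)) \<le> (\<Sum>n. ennreal (hit_prob P pol g z n))"
      by (rule ennreal_suminf_Suc_le)
    also have "\<dots> \<le> 1"
      by (rule suminf_hit_le_1)
    finally show "(\<Sum>t. ennreal (?q t)) \<le> 1" .
  qed (use assms in auto)
  then show ?thesis
    using assms by simp
qed

lemma expected_return_ge:
  assumes "0 \<le> \<gamma>" "\<gamma> < 1" and "hit_prob P pol g z (Suc m) = 1"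
  shows "\<gamma> ^ m \<le> expected_return P pol g (return_pmf z) \<gamma>"
  unfolding expected_return_def
  using sum_le_suminf[OF summable_expected_return[OF assms(1,2), of P pol g "return_pmf z"], of "{m}"]
    assms by simp

lemma expected_return_le_if_hits_at_goal_dist:
  assumes "0 \<le> \<gamma>" "\<gamma> < 1"
    and hits: "\<forall>z\<in>set_pmf mu. hit_prob P pol g z (goal_dist P g z) = 1"
  shows "expected_return P pol' g mu \<gamma> \<le> expected_return P pol g mu \<gamma>"
proof -
  have "expected_return P pol' g (return_pmf z) \<gamma> \<le> expected_return P pol g (return_pmf z) \<gamma>"
    if "z \<in> set_pmf mu" for z
  proof (cases "z = g")
    case True
    then show ?thesis
      using expected_return_nonneg[OF assms(1,2), of P pol g "return_pmf g"]
      by (simp add: expected_return_from_goal)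
  next
    case False
    have hit: "hit_prob P pol g z (goal_dist P g z) = 1"
      using hits that by blast
    then have "reachable P g z"
      using goal_dist_le_if_hit_prob_nonzero[of P pol g z "goal_dist P g z"] by simp
    then have "goal_dist P g z \<noteq> 0"
      using False by (simp add: goal_dist_eq_0_iff)
    then obtain m where m: "goal_dist P g z = Suc m"
      using not0_implies_Suc by blast
    have "expected_return P pol' g (return_pmf z) \<gamma> \<le> \<gamma> ^ m"
      using expected_return_le_goal_dist[OF assms(1,2), of P pol' g z] m by simp
    also have "\<dots> \<le> expected_return P pol g (return_pmf z) \<gamma>"
      using hit m by (intro expected_return_ge[OF assms(1,2)]) simp
    finally show ?thesis .
  qed
  then have "ennreal (expected_return P pol' g mu \<gamma>) \<le> ennreal (expected_return P pol g mu \<gamma>)"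
    unfolding ennreal_expected_return_bind[OF assms(1,2), of P _ g mu]
    by (intro nn_integral_mono_AE AE_pmfI ennreal_leI) blast
  then show ?thesis
    using expected_return_nonneg[OF assms(1,2), of P pol g mu] ennreal_le_iff by blast
qed

lemma hits_at_goal_dist_if_wasserstein_minimal:
  assumes det: "deterministic P" and "0 \<le> \<gamma>" "\<gamma> < 1"
    and finite: "wasserstein_obj P pol g mu \<gamma> \<noteq> \<infinity>"
    and minimal: "wasserstein_obj P pol g mu \<gamma> \<le> wasserstein_obj P (shortest_policy P g) g mu \<gamma>"
    and z: "z \<in> set_pmf mu"
  shows "hit_prob P pol g z (goal_dist P g z) = 1"
proof -
  let ?vis = "visitation P pol g mu \<gamma>"
  let ?D = "\<integral>\<^sup>+s. ?vis s * goal_dist_ext P g s \<partial>count_space UNIV"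
  have reach: "\<forall>z\<in>set_pmf mu. reachable P g z"
    using reachable_if_wasserstein_obj_finite[OF assms(3) finite] by blast
  have upper: "wasserstein_obj P pol g mu \<gamma> \<le> ?D"
    using minimal wasserstein_obj_shortest_policy_le[OF det assms(2) reach] by (rule order.trans)
  have lower: "?D \<le> wasserstein_obj P pol g mu \<gamma>"
    unfolding wasserstein_obj_def
    by (intro nn_integral_mono mult_left_mono goal_dist_ext_le_hit_time_exp) simp
  have "hit_time_exp P pol z g \<le> goal_dist_ext P g z"
  proof (rule weighted_nn_integral_le_imp_le[where w = ?vis and f = "\<lambda>s. hit_time_exp P pol s g"])
    show "goal_dist_ext P g s \<le> hit_time_exp P pol s g" for s
      by (rule goal_dist_ext_le_hit_time_exp)
    show "(\<integral>\<^sup>+s. ?vis s * hit_time_exp P pol s g \<partial>count_space UNIV) \<le> ?D"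
      using upper unfolding wasserstein_obj_def .
    show "?D \<noteq> \<infinity>"
      using lower finite by (auto simp: top_unique)
    show "?vis z \<noteq> 0"
      using visitation_pos[OF assms(3) z] .
  qed
  then show ?thesis
    using reach z by (intro hit_prob_goal_dist_eq_1) (auto simp: goal_dist_ext_def)
qed

theorem theorem1:
  fixes P :: "'s \<Rightarrow> 'a \<Rightarrow> 's \<Rightarrow> 's pmf"
    and rho0 :: "'s pmf" and \<gamma> :: real
    and pol :: "'s \<Rightarrow> 's \<Rightarrow> 'a pmf" and g :: 's
  assumes deterministic: "\<forall>s a sg. \<exists>s'. P s a sg = return_pmf s'"
    and "0 \<le> \<gamma>" and "\<gamma> < 1"
    and finite_W: "wasserstein_obj P pol g rho0 \<gamma> \<noteq> \<infinity>"
    and minimizer: "\<forall>pol'. wasserstein_obj P pol g rho0 \<gamma> \<le> wasserstein_obj P pol' g rho0 \<gamma>"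
  shows "\<forall>pol'. expected_return P pol' g rho0 \<gamma> \<le> expected_return P pol g rho0 \<gamma>"
proof
  fix pol'
  have det: "deterministic P"
    using deterministic by (simp add: deterministic_def)
  have "\<forall>z\<in>set_pmf rho0. hit_prob P pol g z (goal_dist P g z) = 1"
    using hits_at_goal_dist_if_wasserstein_minimal[OF det assms(2,3) finite_W minimizer[rule_format]]
    by blast
  then show "expected_return P pol' g rho0 \<gamma> \<le> expected_return P pol g rho0 \<gamma>"
    by (rule expected_return_le_if_hits_at_goal_dist[OF assms(2,3)])
qed

end
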